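(* Let $n\geqslant 2$ and let $\alpha\in\mathcal{POI}_n$ have rank $n-1$. Then $\alpha\in\mathcal{AO}_n$ if and only if $\mathrm{d}(\alpha)$ and $\mathrm{i}(\alpha)$ have the same parity.
   Context: Let $\Omega_n=\{1<2<\cdots<n\}$. $\mathcal{I}_n$ denotes the symmetric inverse monoid of all partial injective maps (partial permutations) of $\Omega_n$, with maps written on the right and composed left to right. For $\alpha\in\mathcal{I}_n$, $\mathrm{Dom}(\alpha)$ and $\mathrm{Im}(\alpha)$ are its domain and image and its rank is $|\mathrm{Im}(\alpha)|$. $\mathcal{AI}_n$ is the set of all $\alpha\in\mathcal{I}_n$ such that $\alpha=\sigma|_{\mathrm{Dom}(\alpha)}$ for some even permutation $\sigma$ of $\Omega_n$. $\mathcal{POI}_n$ is the set of order-preserving elements of $\mathcal{I}_n$ (i.e. $x\leqslant y$ implies $x\alpha\leqslant y\alpha$ for $x,y\in\mathrm{Dom}(\alpha)$), and $\mathcal{AO}_n=\mathcal{AI}_n\cap\mathcal{POI}_n$. For $\alpha\in\mathcal{I}_n$ of rank $n-1$, $\mathrm{d}(\alpha)$ is the unique element of $\Omega_n\setminus\mathrm{Dom}(\alpha)$ and $\mathrm{i}(\alpha)$ is the unique element of $\Omega_n\setminus\mathrm{Im}(\alpha)$. *)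

theory Defs
  imports "HOL-Combinatorics.Permutations"
begin

text \<open>Partial injective maps of Omega_n = {1..n}, represented as partial maps
  nat \<Rightarrow> nat option with domain and image inside {1..n}.\<close>

definition I_n :: "nat \<Rightarrow> (nat \<Rightarrow> nat option) set" where
  "I_n n = {\<alpha>. dom \<alpha> \<subseteq> {1..n} \<and> ran \<alpha> \<subseteq> {1..n} \<and> inj_on \<alpha> (dom \<alpha>)}"

definition AI_n :: "nat \<Rightarrow> (nat \<Rightarrow> nat option) set" where
  "AI_n n = {\<alpha> \<in> I_n n. \<exists>\<sigma>. \<sigma> permutes {1..n} \<and> evenperm \<sigma> \<and>
                 (\<forall>x \<in> dom \<alpha>. \<alpha> x = Some (\<sigma> x))}"

definition POI_n :: "nat \<Rightarrow> (nat \<Rightarrow> nat option) set" where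
  "POI_n n = {\<alpha> \<in> I_n n. \<forall>x \<in> dom \<alpha>. \<forall>y \<in> dom \<alpha>. x \<le> y \<longrightarrow> the (\<alpha> x) \<le> the (\<alpha> y)}"

definition AO_n :: "nat \<Rightarrow> (nat \<Rightarrow> nat option) set" where
  "AO_n n = AI_n n \<inter> POI_n n"

definition rank :: "(nat \<Rightarrow> nat option) \<Rightarrow> nat" where
  "rank \<alpha> = card (ran \<alpha>)"

text \<open>d(alpha): the unique element of Omega_n not in Dom(alpha);
  i(alpha): the unique element of Omega_n not in Im(alpha) (for rank n-1).\<close>
definition d_elem :: "nat \<Rightarrow> (nat \<Rightarrow> nat option) \<Rightarrow> nat" where
  "d_elem n \<alpha> = the_elem ({1..n} - dom \<alpha>)"

definition i_elem :: "nat \<Rightarrow> (nat \<Rightarrow> nat option) \<Rightarrow> nat" where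
  "i_elem n \<alpha> = the_elem ({1..n} - ran \<alpha>)"

end

(* An order-preserving partial injection of rank n - 1 with d = d(alpha) and i = i(alpha)
   is a strictly increasing bijection from Omega_n - {d} onto Omega_n - {i}; counting the
   points below x shows that it agrees with the cycle (d i i-1 ... d+1), or (d i i+1 ... d-1)
   when i < d, a product of |i - d| adjacent transpositions. A permutation of Omega_n that
   extends alpha has to send d to the only free point i, so this cycle is the unique extension,
   and alpha is the restriction of an even permutation iff |i - d| is even. *)

theory Submission
  imports Defs
begin

definition shift_perm :: "nat \<Rightarrow> nat \<Rightarrow> nat \<Rightarrow> nat" where
  "shift_perm d i x =
     (if x = d then i
      else if d < x \<and> x \<le> i then x - 1
      else if i \<le> x \<and> x < d then x + 1
      else x)"

lemma shift_perm_swap_comp: "shift_perm i d \<circ> shift_perm d i = id"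
  by (rule ext) (auto simp: shift_perm_def)

lemma inv_shift_perm: "inv (shift_perm d i) = shift_perm i d"
  by (rule inv_unique_comp) (rule shift_perm_swap_comp)+

lemma shift_perm_permutes: "shift_perm d i permutes {min d i..max d i}"
proof (rule bij_imp_permutes)
  let ?S = "{min d i..max d i}"
  have "bij (shift_perm d i)"
    by (rule o_bij) (rule shift_perm_swap_comp)+
  moreover have "shift_perm d i ` ?S = ?S"
  proof
    show "shift_perm d i ` ?S \<subseteq> ?S"
      by (auto simp: shift_perm_def)
    show "?S \<subseteq> shift_perm d i ` ?S"
    proof
      fix x assume "x \<in> ?S"
      then have "shift_perm i d x \<in> ?S"
        by (auto simp: shift_perm_def)
      moreover have "x = shift_perm d i (shift_perm i d x)"
        using shift_perm_swap_comp[of d i] by (simp add: fun_eq_iff)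
      ultimately show "x \<in> shift_perm d i ` ?S" by blast
    qed
  qed
  ultimately show "bij_betw (shift_perm d i) ?S ?S"
    by (rule bij_betw_subset[OF _ subset_UNIV])
  show "shift_perm d i x = x" if "x \<notin> ?S" for x
    using that by (auto simp: shift_perm_def)
qed

lemma permutation_shift_perm: "permutation (shift_perm d i)"
  using shift_perm_permutes finite_atLeastAtMost permutation_permutes by blast

lemma shift_perm_Suc:
  "d \<le> i \<Longrightarrow> shift_perm d (Suc i) = transpose i (Suc i) \<circ> shift_perm d i"
  by (rule ext) (auto simp: shift_perm_def transpose_def)

lemma evenperm_shift_perm_add: "evenperm (shift_perm d (d + k)) \<longleftrightarrow> even k"
proof (induction k)
  case 0
  have "shift_perm d d = id"
    by (rule ext) (simp add: shift_perm_def)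
  then show ?case by simp
next
  case (Suc k)
  have "evenperm (shift_perm d (d + Suc k))
      \<longleftrightarrow> evenperm (transpose (d + k) (Suc (d + k)) \<circ> shift_perm d (d + k))"
    by (simp add: shift_perm_Suc)
  also have "\<dots> \<longleftrightarrow> \<not> evenperm (shift_perm d (d + k))"
    by (simp add: evenperm_comp permutation_swap_id permutation_shift_perm evenperm_swap)
  finally show ?case using Suc.IH by simp
qed

lemma evenperm_shift_perm_le: "d \<le> i \<Longrightarrow> evenperm (shift_perm d i) \<longleftrightarrow> even (i - d)"
  using evenperm_shift_perm_add[of d "i - d"] by simp

lemma evenperm_shift_perm: "evenperm (shift_perm d i) \<longleftrightarrow> (even d \<longleftrightarrow> even i)"
proof (cases "d \<le> i")
  case True
  then show ?thesis by (auto simp: evenperm_shift_perm_le)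
next
  case False
  then have "evenperm (shift_perm i d) \<longleftrightarrow> (even d \<longleftrightarrow> even i)"
    by (auto simp: evenperm_shift_perm_le)
  then show ?thesis
    using evenperm_inv[OF permutation_shift_perm, of d i] by (simp add: inv_shift_perm)
qed

lemma card_le_strict_mono_on_bij:
  fixes f :: "'a::linorder \<Rightarrow> 'b::linorder"
  assumes "bij_betw f A B" and "strict_mono_on A f" and "x \<in> A"
  shows "card {a \<in> A. a \<le> x} = card {b \<in> B. b \<le> f x}"
proof (rule bij_betw_same_card, rule bij_betw_subset[OF assms(1)])
  show "{a \<in> A. a \<le> x} \<subseteq> A" by blast
  show "f ` {a \<in> A. a \<le> x} = {b \<in> B. b \<le> f x}"
    using assms bij_betw_imp_surj_on[OF assms(1)] strict_mono_on_less_eq[OF assms(2)]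
    by auto
qed

lemma card_le_in_punctured_interval:
  assumes "x \<in> {1..n} - {e}" and "1 \<le> e"
  shows "card {z \<in> {1..n} - {e}. z \<le> x} = x - (if e < x then 1 else 0)"
proof -
  have "{z \<in> {1..n} - {e}. z \<le> x} = {1..x} - {e}"
    using assms by auto
  then show ?thesis
    using assms by (auto simp: card_Diff_singleton_if)
qed

lemma strict_mono_on_bij_punctured_eq_shift_perm:
  assumes "bij_betw f ({1..n} - {d}) ({1..n} - {i})" and "strict_mono_on ({1..n} - {d}) f"
    and "d \<in> {1..n}" and "i \<in> {1..n}" and "x \<in> {1..n} - {d}"
  shows "f x = shift_perm d i x"
proof -
  have fx: "f x \<in> {1..n} - {i}"
    using assms(1,5) bij_betwE by blast
  have "f x - (if i < f x then 1 else 0) = x - (if d < x then 1 else 0)"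
    using card_le_strict_mono_on_bij[OF assms(1,2,5)] assms(3,4)
      card_le_in_punctured_interval[OF assms(5)] card_le_in_punctured_interval[OF fx]
    by simp
  with fx assms(5) show ?thesis
    unfolding shift_perm_def by (cases "i < f x"; cases "d < x") auto
qed

lemma permutes_eq_if_eq_on_Diff_singleton:
  assumes "\<sigma> permutes S" and "\<tau> permutes S" and "\<forall>x \<in> S - {d}. \<sigma> x = \<tau> x"
  shows "\<sigma> = \<tau>"
proof
  fix x
  show "\<sigma> x = \<tau> x"
  proof (cases "x \<in> S - {d}")
    case True
    then show ?thesis using assms(3) by blast
  next
    case x: False
    show ?thesis
    proof (cases "x \<in> S")
      case False
      then show ?thesis using assms(1,2) by (simp add: permutes_not_in)
    next
      case True
      with x have "x = d" by blast
      obtain y where y: "y \<in> S" "\<tau> y = \<sigma> d"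
        using permutes_in_image[OF assms(1)] permutes_image[OF assms(2)] \<open>x \<in> S\<close> \<open>x = d\<close>
        by (metis imageE)
      have "y = d"
      proof (rule ccontr)
        assume "y \<noteq> d"
        then have "\<sigma> y = \<sigma> d" using y assms(3) by simp
        then show False using \<open>y \<noteq> d\<close> permutes_inj[OF assms(1)] by (auto dest: injD)
      qed
      then show ?thesis using y \<open>x = d\<close> by simp
    qed
  qed
qed

lemma AI_n_iff_evenperm_extension:
  assumes "\<alpha> \<in> I_n n" and "\<sigma> permutes {1..n}" and "dom \<alpha> = {1..n} - {d}"
    and "\<forall>x \<in> dom \<alpha>. \<alpha> x = Some (\<sigma> x)"
  shows "\<alpha> \<in> AI_n n \<longleftrightarrow> evenperm \<sigma>"
proof
  assume "\<alpha> \<in> AI_n n"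
  then obtain \<tau> where \<tau>: "\<tau> permutes {1..n}" "evenperm \<tau>" "\<forall>x \<in> dom \<alpha>. \<alpha> x = Some (\<tau> x)"
    by (auto simp: AI_n_def)
  have "\<tau> = \<sigma>"
    using permutes_eq_if_eq_on_Diff_singleton[OF \<tau>(1) assms(2), of d] \<tau>(3) assms(3,4) by simp
  then show "evenperm \<sigma>" using \<tau>(2) by simp
next
  assume "evenperm \<sigma>"
  then show "\<alpha> \<in> AI_n n" using assms by (auto simp: AI_n_def)
qed

lemma the_elem_Diff_card_pred:
  assumes "finite T" and "S \<subseteq> T" and "card S = card T - 1" and "T \<noteq> {}"
  shows "the_elem (T - S) \<in> T" and "S = T - {the_elem (T - S)}"
proof -
  have "card (T - S) = 1"
    using assms by (simp add: card_Diff_subset finite_subset card_gt_0_iff Suc_leI)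
  then obtain e where "T - S = {e}"
    by (meson card_1_singletonE)
  with assms(2) show "the_elem (T - S) \<in> T" and "S = T - {the_elem (T - S)}"
    by auto
qed

lemma POI_n_strict_mono_bij:
  assumes "\<alpha> \<in> POI_n n"
  shows "strict_mono_on (dom \<alpha>) (\<lambda>x. the (\<alpha> x))"
    and "bij_betw (\<lambda>x. the (\<alpha> x)) (dom \<alpha>) (ran \<alpha>)"
proof -
  have inj: "inj_on (\<lambda>x. the (\<alpha> x)) (dom \<alpha>)"
  proof (rule inj_onI)
    fix x y assume "x \<in> dom \<alpha>" "y \<in> dom \<alpha>" "the (\<alpha> x) = the (\<alpha> y)"
    then have "\<alpha> x = \<alpha> y"
      by (metis domIff option.expand)
    then show "x = y"
      using assms \<open>x \<in> dom \<alpha>\<close> \<open>y \<in> dom \<alpha>\<close> by (auto simp: POI_n_def I_n_def dest: inj_onD)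
  qed
  moreover have "(\<lambda>x. the (\<alpha> x)) ` dom \<alpha> = ran \<alpha>"
    by (force simp: ran_def)
  ultimately show "bij_betw (\<lambda>x. the (\<alpha> x)) (dom \<alpha>) (ran \<alpha>)"
    by (simp add: bij_betw_def)
  show "strict_mono_on (dom \<alpha>) (\<lambda>x. the (\<alpha> x))"
  proof (rule strict_mono_onI)
    fix x y assume "x \<in> dom \<alpha>" "y \<in> dom \<alpha>" "x < y"
    show "the (\<alpha> x) < the (\<alpha> y)"
    proof -
      have "the (\<alpha> x) \<le> the (\<alpha> y)"
        using assms \<open>x \<in> dom \<alpha>\<close> \<open>y \<in> dom \<alpha>\<close> \<open>x < y\<close> by (simp add: POI_n_def)
      moreover have "the (\<alpha> x) \<noteq> the (\<alpha> y)"
        using inj_onD[OF inj] \<open>x \<in> dom \<alpha>\<close> \<open>y \<in> dom \<alpha>\<close> \<open>x < y\<close> by blast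
      ultimately show ?thesis by simp
    qed
  qed
qed

lemma POI_n_rank_pred_dom_ran:
  assumes "n \<ge> 1" and "\<alpha> \<in> POI_n n" and "rank \<alpha> = n - 1"
  shows "d_elem n \<alpha> \<in> {1..n}" and "dom \<alpha> = {1..n} - {d_elem n \<alpha>}"
    and "i_elem n \<alpha> \<in> {1..n}" and "ran \<alpha> = {1..n} - {i_elem n \<alpha>}"
proof -
  have card: "card (ran \<alpha>) = card {1..n} - 1" "card (dom \<alpha>) = card {1..n} - 1"
    using assms(3) bij_betw_same_card[OF POI_n_strict_mono_bij(2)[OF assms(2)]]
    by (simp_all add: rank_def)
  moreover have "dom \<alpha> \<subseteq> {1..n}" "ran \<alpha> \<subseteq> {1..n}" "{1..n} \<noteq> {}"
    using assms(1,2) by (auto simp: POI_n_def I_n_def)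
  ultimately show "d_elem n \<alpha> \<in> {1..n}" "dom \<alpha> = {1..n} - {d_elem n \<alpha>}"
    and "i_elem n \<alpha> \<in> {1..n}" "ran \<alpha> = {1..n} - {i_elem n \<alpha>}"
    unfolding d_elem_def i_elem_def
    using the_elem_Diff_card_pred[of "{1..n}" "dom \<alpha>"] the_elem_Diff_card_pred[of "{1..n}" "ran \<alpha>"]
    by auto
qed

lemma POI_n_rank_pred_eq_shift_perm:
  assumes "n \<ge> 1" and "\<alpha> \<in> POI_n n" and "rank \<alpha> = n - 1" and "x \<in> dom \<alpha>"
  shows "\<alpha> x = Some (shift_perm (d_elem n \<alpha>) (i_elem n \<alpha>) x)"
proof -
  note dom_ran = POI_n_rank_pred_dom_ran[OF assms(1-3)]
  note mono = POI_n_strict_mono_bij[OF assms(2)]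
  have "the (\<alpha> x) = shift_perm (d_elem n \<alpha>) (i_elem n \<alpha>) x"
    using strict_mono_on_bij_punctured_eq_shift_perm[OF mono(2,1)[unfolded dom_ran(2,4)]]
      dom_ran assms(4) by blast
  with assms(4) show ?thesis by auto
qed

theorem proposition1p1:
  fixes n :: nat and \<alpha> :: "nat \<Rightarrow> nat option"
  assumes "n \<ge> 2" and "\<alpha> \<in> POI_n n" and "rank \<alpha> = n - 1"
  shows "\<alpha> \<in> AO_n n \<longleftrightarrow> (even (d_elem n \<alpha>) \<longleftrightarrow> even (i_elem n \<alpha>))"
proof -
  let ?\<sigma> = "shift_perm (d_elem n \<alpha>) (i_elem n \<alpha>)"
  have n: "n \<ge> 1" using assms(1) by simp
  note dom_ran = POI_n_rank_pred_dom_ran[OF n assms(2,3)]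
  have "?\<sigma> permutes {1..n}"
    using dom_ran(1,3) by (intro permutes_subset[OF shift_perm_permutes]) auto
  moreover have "\<alpha> \<in> I_n n"
    using assms(2) by (simp add: POI_n_def)
  ultimately have "\<alpha> \<in> AI_n n \<longleftrightarrow> evenperm ?\<sigma>"
    using AI_n_iff_evenperm_extension[OF _ _ dom_ran(2)]
      POI_n_rank_pred_eq_shift_perm[OF n assms(2,3)] by blast
  then show ?thesis
    using assms(2) by (simp add: AO_n_def evenperm_shift_perm)
qed

end
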